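(* Let $(H,f)$ be a vertex-weighted graph with $H$ connected and $f$ not identically zero, and let $G=L(H,f)$. If $k(G)=1$, then at least one of the following holds: (i) $f(v)=1$ for some vertex $v$ of $H$; (ii) there exists a vertex $v$ of $H$ with $f(v)=0$ such that $K_H(v)$ contains a simplicial vertex of $G$.
   Context: All graphs are finite and simple. For a digraph $D$, its competition graph $C(D)$ has vertex set $V(D)$, two distinct vertices $u,v$ adjacent iff some vertex $x$ satisfies $(u,x),(v,x)\in A(D)$. The competition number $k(G)$ is the smallest nonnegative integer $k$ such that $G$ together with $k$ new isolated vertices is the competition graph of an acyclic digraph. For a positive integer $m$, $CP(m)$ is the complete multipartite graph with $m$ parts each of size two. A vertex-weighted graph $(H,f)$ is a graph $H$ with $f:V(H)\to\mathbb{Z}_{\ge0}$. The generalized line graph $L(H,f)$ is obtained from the disjoint union of the line graph $L(H)$ (vertex set $E(H)$, two distinct edges adjacent iff they share an endpoint) and the graphs $Q_v:=CP(f(v))$ for each $v$ with $f(v)>0$, by adding all edges between every vertex of $Q_v$ and every $e\in E(H)$ incident to $v$. $K_H(v)$ is the set of edges of $H$ incident to $v$. A vertex is simplicial if its neighborhood is a clique. *)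

theory Defs
  imports Main
begin

definition simple_graph :: "'a set \<Rightarrow> 'a set set \<Rightarrow> bool" where
  "simple_graph V E \<longleftrightarrow> finite V \<and> (\<forall>e\<in>E. e \<subseteq> V \<and> card e = 2)"

definition connected_graph :: "'a set \<Rightarrow> 'a set set \<Rightarrow> bool" where
  "connected_graph V E \<longleftrightarrow> V \<noteq> {} \<and>
     (\<forall>u\<in>V. \<forall>v\<in>V. (u, v) \<in> {(x, y). {x, y} \<in> E}\<^sup>*)"

definition competition_edges :: "'a set \<Rightarrow> ('a \<times> 'a) set \<Rightarrow> 'a set set" where
  "competition_edges V A = {{u, v} | u v. u \<in> V \<and> v \<in> V \<and> u \<noteq> v \<and>
      (\<exists>x. (u, x) \<in> A \<and> (v, x) \<in> A)}"

text \<open>G together with k new isolated vertices (tagged Inr) is the competition graph of an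
  acyclic digraph.\<close>
definition comp_representable :: "'a set \<Rightarrow> 'a set set \<Rightarrow> nat \<Rightarrow> bool" where
  "comp_representable V E k \<longleftrightarrow>
     (\<exists>A :: (('a + nat) \<times> ('a + nat)) set.
        A \<subseteq> (Inl ` V \<union> Inr ` {..<k}) \<times> (Inl ` V \<union> Inr ` {..<k}) \<and> acyclic A \<and>
        competition_edges (Inl ` V \<union> Inr ` {..<k}) A = (\<lambda>e. Inl ` e) ` E)"

definition competition_number :: "'a set \<Rightarrow> 'a set set \<Rightarrow> nat" where
  "competition_number V E = (LEAST k. comp_representable V E k)"

definition simplicial :: "'a set \<Rightarrow> 'a set set \<Rightarrow> 'a \<Rightarrow> bool" where
  "simplicial V E x \<longleftrightarrow>
     (\<forall>u\<in>V. \<forall>w\<in>V. {x, u} \<in> E \<and> {x, w} \<in> E \<and> u \<noteq> w \<longrightarrow> {u, w} \<in> E)"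

text \<open>Generalized line graph L(H,f). Vertices: Inl e for edges e of H, and
  Inr (v, i, b) for v with i < f v, b :: bool, forming CP(f v) with parts
  {(v,i,False),(v,i,True)}.\<close>
definition gl_vertices :: "'a set \<Rightarrow> 'a set set \<Rightarrow> ('a \<Rightarrow> nat) \<Rightarrow> ('a set + ('a \<times> nat \<times> bool)) set" where
  "gl_vertices VH EH f = Inl ` EH \<union> {Inr (v, i, b) | v i b. v \<in> VH \<and> i < f v}"

definition gl_edges :: "'a set \<Rightarrow> 'a set set \<Rightarrow> ('a \<Rightarrow> nat) \<Rightarrow> ('a set + ('a \<times> nat \<times> bool)) set set" where
  "gl_edges VH EH f =
     {{Inl e, Inl e'} | e e'. e \<in> EH \<and> e' \<in> EH \<and> e \<noteq> e' \<and> e \<inter> e' \<noteq> {}}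
   \<union> {{Inr (v, i, b), Inr (v, j, c)} | v i j b c. v \<in> VH \<and> i < f v \<and> j < f v \<and> i \<noteq> j}
   \<union> {{Inr (v, i, b), Inl e} | v i b e. v \<in> VH \<and> i < f v \<and> e \<in> EH \<and> v \<in> e}"

end

theory Submission
  imports Defs
begin

text \<open>An acyclic digraph whose competition graph is G plus one isolated vertex z has a vertex x of G
  with no prey in G (a sink of the arcs restricted to G). Every neighbour of x shares a prey with x,
  which can only be z; hence all neighbours of x prey on z and form a clique: x is simplicial.
  In L(H,f) each part of Q_v is a non-adjacent pair lying in the neighbourhood of every other
  vertex of Q_v and of every edge of H at v. So a simplicial vertex of Q_v forces f v = 1, and a
  simplicial edge of H forces f = 0 at both of its ends.\<close>

lemma comp_representable_card_edges:
  assumes "finite V" and edges: "\<forall>e\<in>E. e \<subseteq> V \<and> card e = 2"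
  shows "comp_representable V E (card E)"
proof -
  have "finite E"
    using assms by (meson Pow_iff finite_Pow_iff rev_finite_subset subsetI)
  then obtain g where g: "bij_betw g {..<card E} E"
    using ex_bij_betw_nat_finite by (auto simp: atLeast0LessThan)
  have gE: "g i \<in> E" if "i < card E" for i
    using g that by (auto simp: bij_betw_def)
  let ?V' = "Inl ` V \<union> Inr ` {..<card E} :: ('a + nat) set"
  define A :: "(('a + nat) \<times> ('a + nat)) set"
    where "A = {(Inl u, Inr i) | u i. i < card E \<and> u \<in> g i}"
  have "A \<subseteq> ?V' \<times> ?V'"
    unfolding A_def using gE edges by auto
  moreover have "acyclic A"
  proof -
    have "x \<in> range Inl \<and> y \<in> range Inr" if "(x, y) \<in> A\<^sup>+" for x y
      using that by (induction rule: trancl_induct) (auto simp: A_def)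
    then show ?thesis unfolding acyclic_def by fastforce
  qed
  moreover have "competition_edges ?V' A = (\<lambda>e. Inl ` e) ` E"
  proof
    show "competition_edges ?V' A \<subseteq> (\<lambda>e. Inl ` e) ` E"
    proof
      fix s :: "('a + nat) set" assume "s \<in> competition_edges ?V' A"
      then obtain u w i where uw: "s = {Inl u, Inl w}" "u \<noteq> w" "i < card E" "u \<in> g i" "w \<in> g i"
        unfolding competition_edges_def A_def by blast
      have "card (g i) = 2" using gE edges uw(3) by auto
      then have "g i = {u, w}"
        using uw by (metis card_2_iff doubleton_eq_iff insertE singletonD)
      then show "s \<in> (\<lambda>e. Inl ` e) ` E" using gE uw by auto
    qed
  next
    show "(\<lambda>e. Inl ` e) ` E \<subseteq> competition_edges ?V' A"
    proof
      fix s :: "('a + nat) set" assume "s \<in> (\<lambda>e. Inl ` e) ` E"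
      then obtain e where e: "e \<in> E" "s = Inl ` e" by auto
      then obtain i where i: "i < card E" "g i = e"
        using g unfolding bij_betw_def by (metis image_iff lessThan_iff)
      obtain u w where uw: "e = {u, w}" "u \<noteq> w" using edges e card_2_iff by metis
      have "u \<in> V" "w \<in> V" using edges e uw by auto
      moreover have "(Inl u, Inr i) \<in> A" "(Inl w, Inr i) \<in> A" unfolding A_def using i uw by auto
      ultimately show "s \<in> competition_edges ?V' A"
        unfolding competition_edges_def using e uw by blast
    qed
  qed
  ultimately show ?thesis unfolding comp_representable_def by blast
qed

lemma comp_representable_competition_number:
  assumes "finite V" and "\<forall>e\<in>E. e \<subseteq> V \<and> card e = 2"
  shows "comp_representable V E (competition_number V E)"
  unfolding competition_number_def
  using comp_representable_card_edges[OF assms] by (rule LeastI)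

lemma comp_representable_one_imp_simplicial:
  assumes "finite V" and "V \<noteq> {}" and "comp_representable V E 1"
  shows "\<exists>x\<in>V. simplicial V E x"
proof -
  let ?W = "Inl ` V \<union> Inr ` {..<1} :: ('a + nat) set"
  obtain A where A: "A \<subseteq> ?W \<times> ?W" "acyclic A" and comp: "competition_edges ?W A = (\<lambda>e. Inl ` e) ` E"
    using assms(3) unfolding comp_representable_def by blast
  have "finite A"
    using A(1) assms(1) by (meson finite_Un finite_SigmaI finite_imageI finite_lessThan finite_subset)
  then have "wf (A\<inverse>)" using A(2) by (simp add: finite_acyclic_wf acyclic_converse)
  then obtain y where y: "y \<in> Inl ` V" and min: "\<And>z. (z, y) \<in> A\<inverse> \<Longrightarrow> z \<notin> Inl ` V"
    using assms(2) by (metis empty_is_image ex_in_conv wfE_min)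
  then obtain x where x: "y = Inl x" "x \<in> V" by auto
  have no_prey_in_V: "(Inl x, Inl z) \<notin> A" if "z \<in> V" for z
    using min x(1) that by blast
  have edge_iff: "{Inl u, Inl w} \<in> competition_edges ?W A \<longleftrightarrow> {u, w} \<in> E" for u w :: 'a
  proof -
    have "Inl ` {u, w} \<in> (\<lambda>e. Inl ` e) ` E \<longleftrightarrow> {u, w} \<in> E"
      by (rule inj_image_mem_iff) (simp add: inj_on_def inj_image_eq_iff)
    then show ?thesis using comp by simp
  qed
  have preys_on_new: "(Inl u, Inr 0) \<in> A" if "{x, u} \<in> E" for u
  proof -
    have "{Inl x, Inl u} \<in> competition_edges ?W A" using that edge_iff by blast
    then obtain a b p where ab: "{Inl x, Inl u} = {a, b}" "(a, p) \<in> A" "(b, p) \<in> A"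
      unfolding competition_edges_def by blast
    then have p: "(Inl x, p) \<in> A" "(Inl u, p) \<in> A"
      by (auto simp: doubleton_eq_iff)
    have "p \<in> ?W" using A(1) p(1) by blast
    then have "p = Inr 0" using no_prey_in_V p(1) by auto
    then show ?thesis using p by simp
  qed
  have "simplicial V E x"
    unfolding simplicial_def
  proof (intro ballI impI)
    fix u w assume "u \<in> V" "w \<in> V" "{x, u} \<in> E \<and> {x, w} \<in> E \<and> u \<noteq> w"
    then have "{Inl u, Inl w} \<in> competition_edges ?W A"
      using preys_on_new unfolding competition_edges_def by blast
    then show "{u, w} \<in> E" using edge_iff by blast
  qed
  then show ?thesis using x(2) by blast
qed

lemma finite_gl_vertices:
  assumes "simple_graph VH EH"
  shows "finite (gl_vertices VH EH f)"
proof -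
  have "finite VH" and "EH \<subseteq> Pow VH"
    using assms unfolding simple_graph_def by auto
  then have "finite EH" by (meson finite_Pow_iff finite_subset)
  have "{Inr (v, i, b) | v i b. v \<in> VH \<and> i < f v} =
      (Inr ` (SIGMA v:VH. {..<f v} \<times> UNIV) :: ('a set + 'a \<times> nat \<times> bool) set)"
    by auto
  also have "finite \<dots>"
    using \<open>finite VH\<close> by (intro finite_imageI finite_SigmaI) auto
  finally show ?thesis
    unfolding gl_vertices_def using \<open>finite EH\<close> by simp
qed

lemma gl_edges_two_subsets: "\<forall>e\<in>gl_edges VH EH f. e \<subseteq> gl_vertices VH EH f \<and> card e = 2"
  unfolding gl_edges_def gl_vertices_def by (auto simp: card_insert_if)

lemma gl_edges_clique:
  "v \<in> VH \<Longrightarrow> i < f v \<Longrightarrow> j < f v \<Longrightarrow> i \<noteq> j \<Longrightarrow> {Inr (v, i, b), Inr (v, j, c)} \<in> gl_edges VH EH f"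
  unfolding gl_edges_def by (rule UnI1, rule UnI2) blast

lemma gl_edges_incident:
  "v \<in> VH \<Longrightarrow> i < f v \<Longrightarrow> e \<in> EH \<Longrightarrow> v \<in> e \<Longrightarrow> {Inl e, Inr (v, i, b)} \<in> gl_edges VH EH f"
  unfolding gl_edges_def by (rule UnI2) (auto simp: insert_commute)

lemma gl_edges_part_nonadjacent: "{Inr (v, j, False), Inr (v, j, True)} \<notin> gl_edges VH EH f"
  unfolding gl_edges_def by (auto simp: doubleton_eq_iff)

lemma not_simplicial_if_adjacent_to_part:
  assumes "{x, Inr (v, j, False)} \<in> gl_edges VH EH f" "{x, Inr (v, j, True)} \<in> gl_edges VH EH f"
    and "v \<in> VH" "j < f v"
  shows "\<not> simplicial (gl_vertices VH EH f) (gl_edges VH EH f) x"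
proof
  assume "simplicial (gl_vertices VH EH f) (gl_edges VH EH f) x"
  moreover have "Inr (v, j, b) \<in> gl_vertices VH EH f" for b
    using assms(3,4) unfolding gl_vertices_def by blast
  ultimately have "{Inr (v, j, False), Inr (v, j, True)} \<in> gl_edges VH EH f"
    using assms(1,2) unfolding simplicial_def by blast
  then show False by (simp add: gl_edges_part_nonadjacent)
qed

lemma simplicial_gl_clique_vertex:
  assumes "simplicial (gl_vertices VH EH f) (gl_edges VH EH f) (Inr (v, i, b))"
    and "v \<in> VH" "i < f v"
  shows "f v = 1"
proof (rule ccontr)
  assume "f v \<noteq> 1"
  define j where "j = (if i = 0 then 1 else 0 :: nat)"
  have "j < f v" "i \<noteq> j" using \<open>f v \<noteq> 1\<close> assms(3) unfolding j_def by auto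
  then have "{Inr (v, i, b), Inr (v, j, c)} \<in> gl_edges VH EH f" for c
    using assms(2,3) by (intro gl_edges_clique)
  from not_simplicial_if_adjacent_to_part[OF this this assms(2) \<open>j < f v\<close>] assms(1)
  show False ..
qed

lemma simplicial_gl_edge_vertex:
  assumes "simplicial (gl_vertices VH EH f) (gl_edges VH EH f) (Inl e)"
    and "e \<in> EH" "v \<in> e" "v \<in> VH"
  shows "f v = 0"
proof (rule ccontr)
  assume "f v \<noteq> 0"
  then have "0 < f v" by simp
  then have "{Inl e, Inr (v, 0, b)} \<in> gl_edges VH EH f" for b
    using assms(2-4) by (intro gl_edges_incident)
  from not_simplicial_if_adjacent_to_part[OF this this assms(4) \<open>0 < f v\<close>] assms(1)
  show False ..
qed

theorem theorem2p8:
  fixes VH :: "'a set" and EH :: "'a set set" and f :: "'a \<Rightarrow> nat"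
  assumes "simple_graph VH EH"
    and "connected_graph VH EH"
    and "\<exists>v\<in>VH. f v \<noteq> 0"
    and "competition_number (gl_vertices VH EH f) (gl_edges VH EH f) = 1"
  shows "(\<exists>v\<in>VH. f v = 1) \<or>
         (\<exists>v\<in>VH. f v = 0 \<and> (\<exists>e\<in>EH. v \<in> e \<and>
             simplicial (gl_vertices VH EH f) (gl_edges VH EH f) (Inl e)))"
proof -
  let ?V = "gl_vertices VH EH f" and ?E = "gl_edges VH EH f"
  have "finite ?V" using assms(1) by (rule finite_gl_vertices)
  moreover have "?V \<noteq> {}" using assms(3) unfolding gl_vertices_def by auto
  moreover have "comp_representable ?V ?E 1"
    using comp_representable_competition_number[OF \<open>finite ?V\<close> gl_edges_two_subsets] assms(4) by simp
  ultimately obtain x where x: "x \<in> ?V" "simplicial ?V ?E x"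
    using comp_representable_one_imp_simplicial by blast
  show ?thesis
  proof (cases x)
    case (Inr t)
    with x(1) obtain v i b where x_eq: "x = Inr (v, i, b)" and "v \<in> VH" "i < f v"
      unfolding gl_vertices_def by blast
    have "f v = 1"
      using simplicial_gl_clique_vertex[OF x(2)[unfolded x_eq] \<open>v \<in> VH\<close> \<open>i < f v\<close>] .
    then show ?thesis using \<open>v \<in> VH\<close> by blast
  next
    case (Inl e)
    with x(1) have "e \<in> EH" unfolding gl_vertices_def by auto
    with assms(1) have "e \<subseteq> VH" "card e = 2" unfolding simple_graph_def by auto
    then obtain u where "u \<in> e" "u \<in> VH" by (auto simp: card_2_iff)
    have "f u = 0"
      using simplicial_gl_edge_vertex[OF x(2)[unfolded Inl] \<open>e \<in> EH\<close> \<open>u \<in> e\<close> \<open>u \<in> VH\<close>] .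
    then show ?thesis using \<open>u \<in> e\<close> \<open>u \<in> VH\<close> \<open>e \<in> EH\<close> x(2) Inl by blast
  qed
qed

end
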